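(* Fix $\varepsilon>0$, $w\in\mathbb{R}^L$ and $j\in[L]$. There is a unique $a\in\mathbb{R}$ satisfying $$w_j=a+\varepsilon/\sqrt2-\sum_{k\neq j}(w_k-a)_+.$$ Moreover, defining $v\in\mathbb{R}^L$ by $v_j=a+\varepsilon/\sqrt2$ and $v_k=\min\{a,w_k\}$ for $k\neq j$, $v$ is the (unique) Euclidean projection of $w$ onto $R_j^\varepsilon$, i.e. $v=\arg\min_{u\in R_j^\varepsilon}\|w-u\|$.
   Context: $(a)_+=\max\{a,0\}$, $\|\cdot\|$ the Euclidean norm, and $R_j^\varepsilon=\{u\in\mathbb{R}^L: u_j\ge\max_{\ell\neq j}u_\ell+\varepsilon/\sqrt2\}$. *)

theory Defs
  imports "HOL-Analysis.Analysis"
begin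

definition pos_part :: "real \<Rightarrow> real" where
  "pos_part a = max a 0"

text \<open>R_j^eps = {u. u_j \<ge> max_{l \<noteq> j} u_l + eps/sqrt 2}, written as a
  condition on every l \<noteq> j (vacuous if L = 1).\<close>
definition Reg :: "real \<Rightarrow> 'L::finite \<Rightarrow> (real ^ 'L) set" where
  "Reg eps j = {u. \<forall>l. l \<noteq> j \<longrightarrow> u $ j \<ge> u $ l + eps / sqrt 2}"

end

theory Submission
  imports Defs
begin

text \<open>The left-hand side \<open>a \<mapsto> a + c - \<Sum>\<^sub>k\<^sub>\<noteq>\<^sub>j (w\<^sub>k - a)\<^sub>+\<close> of the defining equation is continuous,
  strictly increasing and unbounded in both directions, so it takes the value \<open>w\<^sub>j\<close> exactly once.
  For the projection, the residual \<open>w - v\<close> is \<open>(w\<^sub>k - a)\<^sub>+\<close> off \<open>j\<close> and, by the defining equation,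
  minus their sum at \<open>j\<close>; hence \<open>(w - v) \<bullet> (v - u)\<close> is a nonnegative combination of the
  quantities \<open>(v\<^sub>k - u\<^sub>k) - (v\<^sub>j - u\<^sub>j)\<close>, each of which is \<open>\<ge> 0\<close> wherever its weight is nonzero
  (there \<open>v\<^sub>j - v\<^sub>k = \<epsilon>/\<surd>2 \<le> u\<^sub>j - u\<^sub>k\<close>). This variational inequality characterises the
  nearest point, with strictness from the Pythagorean expansion.\<close>

lemma pos_part_mono: "x \<le> y \<Longrightarrow> pos_part x \<le> pos_part y"
  by (simp add: pos_part_def)

lemma pos_part_nonneg: "0 \<le> pos_part x"
  by (simp add: pos_part_def)

lemma min_add_pos_part: "min a x + pos_part (x - a) = x"
  by (simp add: pos_part_def)

lemma sum_pos_part_antimono: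
  assumes "a \<le> b"
  shows "(\<Sum>k\<in>K. pos_part (f k - b)) \<le> (\<Sum>k\<in>K. pos_part (f k - a))"
  using assms by (intro sum_mono pos_part_mono) simp

lemma sum_pos_part_eq_0:
  assumes "\<And>k. k \<in> K \<Longrightarrow> f k \<le> a"
  shows "(\<Sum>k\<in>K. pos_part (f k - a)) = 0"
  using assms by (intro sum.neutral) (simp add: pos_part_def)

lemma continuous_on_sum_pos_part: "continuous_on A (\<lambda>a. \<Sum>k\<in>K. pos_part (f k - a))"
  unfolding pos_part_def by (intro continuous_intros)

lemma strict_mono_continuous_ex1:
  fixes g :: "real \<Rightarrow> real"
  assumes "strict_mono g" "continuous_on UNIV g" "g x \<le> y" "y \<le> g z"
  shows "\<exists>!a. g a = y"
proof (rule ex_ex1I)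
  have "x \<le> z"
  proof (rule ccontr)
    assume "\<not> x \<le> z"
    then have "g z < g x"
      using assms(1) by (simp add: strict_mono_less)
    then show False
      using assms(3,4) by simp
  qed
  then show "\<exists>a. g a = y"
    using IVT'[of g x y z] assms(2-4) continuous_on_subset by blast
next
  show "a = b" if "g a = y" "g b = y" for a b
  proof -
    have "g a = g b"
      using that by simp
    then show ?thesis
      using strict_mono_eq[OF assms(1)] by blast
  qed
qed

lemma ex1_sum_pos_part_equation:
  fixes f :: "'a \<Rightarrow> real"
  assumes "finite K"
  shows "\<exists>!a. y = a + c - (\<Sum>k\<in>K. pos_part (f k - a))"
proof -
  define g where "g a = a + c - (\<Sum>k\<in>K. pos_part (f k - a))" for a
  define B where "B = \<bar>y - c\<bar> + (\<Sum>k\<in>K. \<bar>f k\<bar>)"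
  have "strict_mono g"
  proof (rule strict_monoI)
    fix a b :: real
    assume "a < b"
    then show "g a < g b"
      using sum_pos_part_antimono[where a = a and b = b and K = K and f = f] by (simp add: g_def)
  qed
  moreover have "continuous_on UNIV g"
    unfolding g_def by (intro continuous_intros continuous_on_sum_pos_part)
  moreover have "g (y - c) \<le> y"
    by (simp add: g_def sum_nonneg pos_part_nonneg)
  moreover have "y \<le> g B"
  proof -
    have "\<bar>f k\<bar> \<le> (\<Sum>k\<in>K. \<bar>f k\<bar>)" if "k \<in> K" for k
      using assms that by (intro member_le_sum) auto
    then have "f k \<le> B" if "k \<in> K" for k
      using that unfolding B_def by fastforce
    then have "g B = B + c"
      by (simp add: g_def sum_pos_part_eq_0)
    moreover have "y - c \<le> B"
      unfolding B_def by (smt (verit) sum_nonneg abs_ge_zero)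
    ultimately show ?thesis
      by simp
  qed
  ultimately have "\<exists>!a. g a = y"
    by (rule strict_mono_continuous_ex1)
  then show ?thesis
    unfolding g_def by (subst eq_commute)
qed

lemma norm_diff_less_if_inner_nonneg:
  fixes w v u :: "'a::real_inner"
  assumes "0 \<le> (w - v) \<bullet> (v - u)" "u \<noteq> v"
  shows "norm (w - v) < norm (w - u)"
proof -
  have "(norm (w - u))\<^sup>2 = (norm (w - v))\<^sup>2 + 2 * ((w - v) \<bullet> (v - u)) + (norm (v - u))\<^sup>2"
    by (simp add: power2_norm_eq_inner inner_add inner_diff inner_commute algebra_simps)
  moreover have "0 < norm (v - u)"
    using assms(2) by simp
  ultimately have "(norm (w - v))\<^sup>2 < (norm (w - u))\<^sup>2"
    using assms(1) by (smt (verit) zero_less_power)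
  then show ?thesis
    by (simp add: power_less_imp_less_base)
qed

lemma inner_residual_nonneg:
  fixes w u :: "real ^ 'n" and j :: 'n
  assumes eq: "w $ j = a + c - (\<Sum>k\<in>UNIV - {j}. pos_part (w $ k - a))"
    and u: "\<And>k. k \<noteq> j \<Longrightarrow> u $ k + c \<le> u $ j"
    and v: "v = (\<chi> k. if k = j then a + c else min a (w $ k))"
  shows "0 \<le> (w - v) \<bullet> (v - u)"
proof -
  define p where "p k = pos_part (w $ k - a)" for k
  define d where "d = v - u"
  have residual_j: "w $ j - v $ j = - (\<Sum>k\<in>UNIV - {j}. p k)"
    using eq by (simp add: v p_def)
  have residual_off_j: "w $ k - v $ k = p k" if "k \<noteq> j" for k
    using that min_add_pos_part[of a "w $ k"] by (simp add: v p_def)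
  have "(w - v) \<bullet> d = (w - v) $ j * d $ j + (\<Sum>k\<in>UNIV - {j}. (w - v) $ k * d $ k)"
    by (simp add: inner_vec_def sum.remove[of UNIV j])
  also have "\<dots> = - (\<Sum>k\<in>UNIV - {j}. p k * d $ j) + (\<Sum>k\<in>UNIV - {j}. p k * d $ k)"
    by (simp add: residual_j residual_off_j sum_distrib_right)
  also have "\<dots> = (\<Sum>k\<in>UNIV - {j}. p k * (d $ k - d $ j))"
    by (simp add: right_diff_distrib sum_subtractf)
  also have "\<dots> \<ge> 0"
  proof (rule sum_nonneg)
    fix k assume "k \<in> UNIV - {j}"
    then have "k \<noteq> j" by simp
    show "0 \<le> p k * (d $ k - d $ j)"
    proof (cases "a < w $ k")
      case True
      then show ?thesis
        using u[OF \<open>k \<noteq> j\<close>] \<open>k \<noteq> j\<close> by (simp add: d_def v p_def pos_part_nonneg)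
    next
      case False
      then show ?thesis by (simp add: p_def pos_part_def)
    qed
  qed
  finally show ?thesis
    by (simp add: d_def)
qed

theorem lemma3:
  fixes eps :: real and w :: "real ^ 'L" and j :: "'L::finite"
  assumes "eps > 0"
  shows "(\<exists>!a::real. w $ j = a + eps / sqrt 2 - (\<Sum>k\<in>UNIV - {j}. pos_part (w $ k - a)))
    \<and> (\<forall>a::real. w $ j = a + eps / sqrt 2 - (\<Sum>k\<in>UNIV - {j}. pos_part (w $ k - a)) \<longrightarrow>
           (let v = (\<chi> k. if k = j then a + eps / sqrt 2 else min a (w $ k)) in
              v \<in> Reg eps j \<and> (\<forall>u\<in>Reg eps j. u \<noteq> v \<longrightarrow> norm (w - v) < norm (w - u))))"
proof -
  define c where "c = eps / sqrt 2"
  have "v \<in> Reg eps j \<and> (\<forall>u\<in>Reg eps j. u \<noteq> v \<longrightarrow> norm (w - v) < norm (w - u))"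
    if eq: "w $ j = a + c - (\<Sum>k\<in>UNIV - {j}. pos_part (w $ k - a))"
      and v: "v = (\<chi> k. if k = j then a + c else min a (w $ k))" for a v
  proof (intro conjI ballI impI)
    show "v \<in> Reg eps j"
      by (simp add: Reg_def v c_def)
  next
    fix u assume "u \<in> Reg eps j" "u \<noteq> v"
    then have "0 \<le> (w - v) \<bullet> (v - u)"
      by (intro inner_residual_nonneg[OF eq _ v]) (simp add: Reg_def c_def)
    then show "norm (w - v) < norm (w - u)"
      using \<open>u \<noteq> v\<close> by (rule norm_diff_less_if_inner_nonneg)
  qed
  moreover have "\<exists>!a. w $ j = a + c - (\<Sum>k\<in>UNIV - {j}. pos_part (w $ k - a))"
    by (rule ex1_sum_pos_part_equation) simp
  ultimately show ?thesis
    unfolding c_def Let_def by blast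
qed

end
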